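(* Let $S$ be a semibounded linear relation in $\mathfrak H$ with lower bound $\gamma\in\mathbb R$, let $c\le\gamma$, and let $Q_c$ be a representing map for $\mathfrak t(S)-c$. Then: (1) $\varphi\in\mathrm{dom}\,\bar{\mathfrak t}(S)$ if and only if there is a sequence $\{\varphi_n,\varphi_n'\}\in S$ with $\varphi_n\to\varphi$ and $(\varphi_n'-\varphi_m',\varphi_n-\varphi_m)\to0$ as $n,m\to\infty$. (2) $\varphi\in\ker(\bar{\mathfrak t}(S)-c)$, i.e. $\varphi\in\mathrm{dom}\,\bar{\mathfrak t}(S)$ with $\bar{\mathfrak t}(S)[\varphi,\varphi]=c\|\varphi\|^2$, if and only if there is a sequence $\{\varphi_n,\varphi_n'\}\in S$ with $\varphi_n\to\varphi$ and $(\varphi_n'-c\varphi_n,\varphi_n)\to0$. (3) $\varphi\in\mathrm{ran}\,Q_c^*$ if and only if there exists $C_\varphi<\infty$ such that $|(\psi,\varphi)|^2\le C_\varphi(\psi',\psi)$ for all $\{\psi,\psi'\}\in S-c$.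
   Context: Linear relations are linear subspaces $T\subset\mathfrak H\times\mathfrak K$; $\mathrm{dom}$, $\mathrm{ran}$ as usual, $T^*=\{\{h,k\}\in\mathfrak K\times\mathfrak H:(k,f)=(h,g)\ \forall\{f,g\}\in T\}$, and $S-c=\{\{f,g-cf\}:\{f,g\}\in S\}$. A relation $S$ in $\mathfrak H$ is semibounded with lower bound $\gamma$ if $\gamma$ is the supremum of all $c$ with $(\varphi',\varphi)\ge c\|\varphi\|^2$ for all $\{\varphi,\varphi'\}\in S$. The form $\mathfrak t(S)[\varphi,\psi]=(\varphi',\psi)$, $\{\varphi,\varphi'\},\{\psi,\psi'\}\in S$, domain $\mathrm{dom}\,S$; it is closable and $\bar{\mathfrak t}(S)$ denotes its closure. A representing map for $\mathfrak t(S)-c$ is a linear operator $Q_c$ from $\mathfrak H$ to a Hilbert space $\mathfrak K_c$ with $\mathrm{dom}\,Q_c=\mathrm{dom}\,S$ and $\mathfrak t(S)[\varphi,\psi]=c(\varphi,\psi)+(Q_c\varphi,Q_c\psi)$; $Q_c^*\subset\mathfrak K_c\times\mathfrak H$ is its adjoint relation. *)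

theory Defs
  imports "HOL-Analysis.Analysis"
begin

text \<open>Inner product linear in the first argument, conjugate linear in the second.
  A complex Hilbert space is a type of class complex_inner and complete_space.\<close>

class complex_inner = real_normed_vector +
  fixes scaleC :: "complex \<Rightarrow> 'a \<Rightarrow> 'a" (infixr \<open>*\<^sub>C\<close> 75)
  fixes cinner :: "'a \<Rightarrow> 'a \<Rightarrow> complex"
  assumes scaleC_add_right: "a *\<^sub>C (x + y) = a *\<^sub>C x + a *\<^sub>C y"
    and scaleC_add_left: "(a + b) *\<^sub>C x = a *\<^sub>C x + b *\<^sub>C x"
    and scaleC_scaleC: "a *\<^sub>C (b *\<^sub>C x) = (a * b) *\<^sub>C x"
    and scaleC_one: "1 *\<^sub>C x = x"
    and scaleR_scaleC: "r *\<^sub>R x = complex_of_real r *\<^sub>C x"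
    and cinner_commute: "cinner x y = cnj (cinner y x)"
    and cinner_add_left: "cinner (x + y) z = cinner x z + cinner y z"
    and cinner_scaleC_left: "cinner (a *\<^sub>C x) y = a * cinner x y"
    and cinner_self_nonneg: "0 \<le> Re (cinner x x)"
    and cinner_self_eq_zero: "cinner x x = 0 \<longleftrightarrow> x = 0"
    and norm_eq_sqrt_cinner: "norm x = sqrt (Re (cinner x x))"

instantiation complex :: complex_inner
begin
definition scaleC_complex :: "complex \<Rightarrow> complex \<Rightarrow> complex" where "scaleC_complex a x = a * x"
definition cinner_complex :: "complex \<Rightarrow> complex \<Rightarrow> complex" where "cinner_complex x y = x * cnj y"
instance
proof
  fix a b :: complex and x y z :: complex and r :: real
  show "a *\<^sub>C (x + y) = a *\<^sub>C x + a *\<^sub>C y" by (simp add: scaleC_complex_def distrib_left)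
  show "(a + b) *\<^sub>C x = a *\<^sub>C x + b *\<^sub>C x" by (simp add: scaleC_complex_def distrib_right)
  show "a *\<^sub>C (b *\<^sub>C x) = (a * b) *\<^sub>C x" by (simp add: scaleC_complex_def)
  show "1 *\<^sub>C x = x" by (simp add: scaleC_complex_def)
  show "r *\<^sub>R x = complex_of_real r *\<^sub>C x" by (simp add: scaleC_complex_def scaleR_conv_of_real)
  show "cinner x y = cnj (cinner y x)" by (simp add: cinner_complex_def)
  show "cinner (x + y) z = cinner x z + cinner y z" by (simp add: cinner_complex_def distrib_right)
  show "cinner (a *\<^sub>C x) y = a * cinner x y" by (simp add: cinner_complex_def scaleC_complex_def)
  show "0 \<le> Re (cinner x x)" by (simp add: cinner_complex_def complex_mult_cnj cmod_def)
  show "cinner x x = 0 \<longleftrightarrow> x = 0" by (simp add: cinner_complex_def)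
  show "norm x = sqrt (Re (cinner x x))" by (simp add: cinner_complex_def complex_mult_cnj cmod_def)
qed
end

definition linear_rel :: "('a::complex_inner \<times> 'b::complex_inner) set \<Rightarrow> bool" where
  "linear_rel T \<longleftrightarrow> (0, 0) \<in> T \<and>
     (\<forall>f g f' g'. (f, g) \<in> T \<longrightarrow> (f', g') \<in> T \<longrightarrow> (f + f', g + g') \<in> T) \<and>
     (\<forall>a f g. (f, g) \<in> T \<longrightarrow> (a *\<^sub>C f, a *\<^sub>C g) \<in> T)"

definition adjoint_rel :: "('a::complex_inner \<times> 'b::complex_inner) set \<Rightarrow> ('b \<times> 'a) set" where
  "adjoint_rel T = {(h, k). \<forall>f g. (f, g) \<in> T \<longrightarrow> cinner k f = cinner h g}"

definition shift_rel :: "('a::complex_inner \<times> 'a) set \<Rightarrow> real \<Rightarrow> ('a \<times> 'a) set" where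
  "shift_rel S c = {(f, g - c *\<^sub>R f) | f g. (f, g) \<in> S}"

definition is_lower_bound :: "('a::complex_inner \<times> 'a) set \<Rightarrow> real \<Rightarrow> bool" where
  "is_lower_bound S c \<longleftrightarrow>
     (\<forall>\<phi> \<phi>'. (\<phi>, \<phi>') \<in> S \<longrightarrow> Im (cinner \<phi>' \<phi>) = 0 \<and> c * (norm \<phi>)\<^sup>2 \<le> Re (cinner \<phi>' \<phi>))"

definition semibounded_with_lb :: "('a::complex_inner \<times> 'a) set \<Rightarrow> real \<Rightarrow> bool" where
  "semibounded_with_lb S \<gamma> \<longleftrightarrow>
     {c. is_lower_bound S c} \<noteq> {} \<and> bdd_above {c. is_lower_bound S c} \<and>
     \<gamma> = Sup {c. is_lower_bound S c}"

text \<open>A form is a pair (domain, values); values outside the domain are normalised to 0.\<close>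
type_synonym 'a form = "'a set \<times> ('a \<Rightarrow> 'a \<Rightarrow> complex)"

definition is_form :: "'a::complex_inner form \<Rightarrow> bool" where
  "is_form t \<longleftrightarrow> 0 \<in> fst t \<and>
     (\<forall>x y. x \<in> fst t \<longrightarrow> y \<in> fst t \<longrightarrow> x + y \<in> fst t) \<and>
     (\<forall>a x. x \<in> fst t \<longrightarrow> a *\<^sub>C x \<in> fst t) \<and>
     (\<forall>x y z. x \<in> fst t \<longrightarrow> y \<in> fst t \<longrightarrow> z \<in> fst t \<longrightarrow>
        snd t (x + y) z = snd t x z + snd t y z \<and> snd t z (x + y) = snd t z x + snd t z y) \<and>
     (\<forall>a x y. x \<in> fst t \<longrightarrow> y \<in> fst t \<longrightarrow>
        snd t (a *\<^sub>C x) y = a * snd t x y \<and> snd t x (a *\<^sub>C y) = cnj a * snd t x y) \<and>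
     (\<forall>x y. x \<notin> fst t \<or> y \<notin> fst t \<longrightarrow> snd t x y = 0)"

definition form_extends :: "'a::complex_inner form \<Rightarrow> 'a form \<Rightarrow> bool" where
  "form_extends t1 t2 \<longleftrightarrow> fst t1 \<subseteq> fst t2 \<and>
     (\<forall>x y. x \<in> fst t1 \<longrightarrow> y \<in> fst t1 \<longrightarrow> snd t2 x y = snd t1 x y)"

definition closed_form :: "'a::complex_inner form \<Rightarrow> bool" where
  "closed_form t \<longleftrightarrow> is_form t \<and>
     (\<forall>x y. snd t x y = cnj (snd t y x)) \<and>
     (\<exists>c. \<forall>x \<in> fst t. c * (norm x)\<^sup>2 \<le> Re (snd t x x)) \<and>
     (\<forall>u x. (\<forall>n. u n \<in> fst t) \<longrightarrow> u \<longlonglongrightarrow> x \<longrightarrow>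
        ((\<lambda>(n, m). snd t (u n - u m) (u n - u m)) \<longlongrightarrow> 0) (sequentially \<times>\<^sub>F sequentially) \<longrightarrow>
        x \<in> fst t \<and> (\<lambda>n. snd t (u n - x) (u n - x)) \<longlonglongrightarrow> 0)"

definition form_closure :: "'a::complex_inner form \<Rightarrow> 'a form" where
  "form_closure t = (THE t'. closed_form t' \<and> form_extends t t' \<and>
      (\<forall>t''. closed_form t'' \<and> form_extends t t'' \<longrightarrow> form_extends t' t''))"

definition form_of_rel :: "('a::complex_inner \<times> 'a) set \<Rightarrow> 'a form" where
  "form_of_rel S = (Domain S, (\<lambda>\<phi> \<psi>. if \<phi> \<in> Domain S \<and> \<psi> \<in> Domain S
       then cinner (SOME \<phi>'. (\<phi>, \<phi>') \<in> S) \<psi> else 0))"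

definition representing_map ::
    "('a::complex_inner \<times> 'a) set \<Rightarrow> real \<Rightarrow> ('a \<Rightarrow> 'b::complex_inner) \<Rightarrow> bool" where
  "representing_map S c Q \<longleftrightarrow>
     (\<forall>x y. x \<in> Domain S \<longrightarrow> y \<in> Domain S \<longrightarrow> Q (x + y) = Q x + Q y) \<and>
     (\<forall>a x. x \<in> Domain S \<longrightarrow> Q (a *\<^sub>C x) = a *\<^sub>C Q x) \<and>
     (\<forall>\<phi> \<psi>. \<phi> \<in> Domain S \<longrightarrow> \<psi> \<in> Domain S \<longrightarrow>
        snd (form_of_rel S) \<phi> \<psi> = complex_of_real c * cinner \<phi> \<psi> + cinner (Q \<phi>) (Q \<psi>))"

definition op_graph :: "('a \<Rightarrow> 'b) \<Rightarrow> 'a set \<Rightarrow> ('a \<times> 'b) set" where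
  "op_graph Q D = {(x, Q x) | x. x \<in> D}"

end

theory Submission
  imports Defs
begin

text \<open>Since c is a lower bound of S, the multivalued part of S is orthogonal to dom S and
  t(S)[\<phi>, \<psi>] = c (\<phi>, \<psi>) + (Q \<phi>, Q \<psi>). The map Q is closable: if f n \<rightarrow> 0 and Q (f n) \<rightarrow> h,
  then (h, Q \<psi>) = lim conj (\<psi>' - c \<psi>, f n) = 0. The form c (\<phi>, \<psi>) + (Q' \<phi>, Q' \<psi>) on the
  domain of the closure Q' of Q is closed, extends t(S), and agrees on the diagonal with every
  closed extension of t(S) (and hence everywhere, by polarization); so it is the closure of t(S).
  For pairs in S, (f' n - f' m, f n - f m) = c \<parallel>f n - f m\<parallel>^2 + \<parallel>Q (f n) - Q (f m)\<parallel>^2 and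
  (f' n - c f n, f n) = \<parallel>Q (f n)\<parallel>^2, so the sequences in (1) and (2) are those along which
  Q (f n) is Cauchy, resp. tends to 0. Finally \<phi> \<in> ran Q* means (\<phi>, \<psi>) = (h, Q \<psi>) on dom S;
  such an h exists iff \<bar>(\<psi>, \<phi>)\<bar>^2 \<le> C \<parallel>Q \<psi>\<parallel>^2 = C (\<psi>' - c \<psi>, \<psi>), by a Riesz-type argument
  that minimizes \<parallel>Q \<psi>\<parallel>^2 - 2 Re (\<psi>, \<phi>) over dom S.\<close>

lemma cinner_zero_left [simp]: "cinner 0 y = 0"
proof -
  have "cinner (0 + 0) y = cinner 0 y + cinner 0 y" by (rule cinner_add_left)
  then show ?thesis by simp
qed

lemma cinner_zero_right [simp]: "cinner x 0 = 0"
  using cinner_commute[of x 0] by simp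

lemma cinner_add_right: "cinner x (y + z) = cinner x y + cinner x z"
  using cinner_commute[of x "y + z"] cinner_commute[of x y] cinner_commute[of x z]
  by (simp add: cinner_add_left)

lemma cinner_scaleC_right: "cinner x (a *\<^sub>C y) = cnj a * cinner x y"
  using cinner_commute[of x "a *\<^sub>C y"] cinner_commute[of x y] by (simp add: cinner_scaleC_left)

lemma cinner_scaleR_left: "cinner (r *\<^sub>R x) y = of_real r * cinner x y"
  by (simp only: scaleR_scaleC cinner_scaleC_left)

lemma cinner_scaleR_right: "cinner x (r *\<^sub>R y) = of_real r * cinner x y"
  by (simp only: scaleR_scaleC cinner_scaleC_right complex_cnj_complex_of_real)

lemma cinner_diff_left: "cinner (x - y) z = cinner x z - cinner y z"
  using cinner_add_left[of x "-y" z] cinner_scaleR_left[of "-1" y z] by simp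

lemma cinner_self_Re: "Re (cinner x x) = (norm x)\<^sup>2"
  by (simp add: norm_eq_sqrt_cinner cinner_self_nonneg)

lemma cinner_self: "cinner x x = of_real ((norm x)\<^sup>2)"
proof (rule complex_eqI)
  show "Im (cinner x x) = Im (of_real ((norm x)\<^sup>2))"
    using arg_cong[OF cinner_commute[of x x], of Im] by simp
qed (simp add: cinner_self_Re)

lemma scaleC_zero_right [simp]: "a *\<^sub>C 0 = 0"
  using scaleC_add_right[of a 0 0] by simp

lemma scaleC_minus_one_left: "(-1) *\<^sub>C x = - x"
  using scaleR_scaleC[of "-1" x, symmetric] by simp

lemma scaleC_scaleR_commute: "a *\<^sub>C (r *\<^sub>R x) = r *\<^sub>R (a *\<^sub>C x)"
  by (simp add: scaleR_scaleC scaleC_scaleC mult.commute)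

lemma norm_scaleC: "norm (a *\<^sub>C x) = cmod a * norm x"
proof -
  have "cinner (a *\<^sub>C x) (a *\<^sub>C x) = (a * cnj a) * cinner x x"
    by (simp add: cinner_scaleC_left cinner_scaleC_right mult.assoc)
  also have "\<dots> = of_real ((cmod a * norm x)\<^sup>2)"
    by (simp add: complex_norm_square[symmetric] cinner_self power_mult_distrib)
  finally have "(norm (a *\<^sub>C x))\<^sup>2 = (cmod a * norm x)\<^sup>2"
    by (simp only: cinner_self of_real_eq_iff)
  then show ?thesis by (simp add: power2_eq_iff_nonneg)
qed

lemma bounded_linear_scaleC: "bounded_linear (\<lambda>x. a *\<^sub>C x)"
proof
  show "\<exists>K. \<forall>x. norm (a *\<^sub>C x) \<le> norm x * K"
    by (rule exI[of _ "cmod a"]) (simp add: norm_scaleC mult.commute)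
qed (simp_all add: scaleC_add_right scaleC_scaleR_commute)

lemmas tendsto_scaleC = bounded_linear.tendsto[OF bounded_linear_scaleC]

lemma nonneg_quadratic_imp_discrim_le:
  fixes a b d :: real
  assumes nonneg: "\<And>t. 0 \<le> a * t\<^sup>2 + 2 * b * t + d" and "0 \<le> a"
  shows "b\<^sup>2 \<le> a * d"
proof (cases "a = 0")
  case True
  have "0 \<le> 2 * b * t + d" for t using nonneg[of t] True by simp
  from this[of "- (d + 1) / (2 * b)"] have "b = 0" by (cases "b = 0") (simp_all add: field_simps)
  then show ?thesis using True by simp
next
  case False
  with \<open>0 \<le> a\<close> have "a > 0" by simp
  have "0 \<le> a * (-b/a)\<^sup>2 + 2 * b * (-b/a) + d" by (rule nonneg)
  also have "\<dots> = (a * d - b\<^sup>2) / a" using \<open>a > 0\<close> by (simp add: field_simps power2_eq_square)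
  finally show ?thesis using \<open>a > 0\<close> by (simp add: zero_le_divide_iff)
qed

lemma norm_add_scaleR_sq:
  "(norm (a + r *\<^sub>R b))\<^sup>2 = (norm a)\<^sup>2 + 2 * r * Re (cinner b a) + r\<^sup>2 * (norm b)\<^sup>2"
proof -
  have "cinner (a + r *\<^sub>R b) (a + r *\<^sub>R b) =
      cinner a a + of_real r * (cinner b a + cnj (cinner b a)) + of_real (r\<^sup>2) * cinner b b"
    using cinner_commute[of a b]
    by (simp add: cinner_add_left cinner_add_right cinner_scaleR_left cinner_scaleR_right
        algebra_simps power2_eq_square)
  from arg_cong[OF this, of Re] show ?thesis by (simp add: cinner_self_Re)
qed

lemma norm_cinner_le: "cmod (cinner x y) \<le> norm x * norm y"
proof -
  define z where "z = cinner x y"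
  define u where "u = (if z = 0 then 1 else cnj z / of_real (cmod z))"
  have "cmod u = 1" by (simp add: u_def norm_divide)
  have uz: "u * z = of_real (cmod z)"
  proof (cases "z = 0")
    case False
    then have "u * z = (z * cnj z) / of_real (cmod z)" by (simp add: u_def field_simps)
    also have "\<dots> = of_real (cmod z)" using False
      by (simp add: complex_norm_square[symmetric] power2_eq_square)
    finally show ?thesis .
  qed (simp add: u_def)
  \<comment> \<open>rotate x so that its inner product with y becomes real and nonnegative\<close>
  have "0 \<le> (norm y)\<^sup>2 * t\<^sup>2 + 2 * cmod z * t + (norm x)\<^sup>2" for t :: real
  proof -
    have "0 \<le> (norm (u *\<^sub>C x + t *\<^sub>R y))\<^sup>2" by simp
    also have "\<dots> = (norm x)\<^sup>2 + 2 * t * cmod z + t\<^sup>2 * (norm y)\<^sup>2"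
      using norm_add_scaleR_sq[of "u *\<^sub>C x" t y] cinner_commute[of y "u *\<^sub>C x"]
      by (simp add: norm_scaleC \<open>cmod u = 1\<close> cinner_scaleC_left uz[unfolded z_def] z_def)
    finally show ?thesis by (simp add: algebra_simps)
  qed
  then have "(cmod z)\<^sup>2 \<le> (norm y)\<^sup>2 * (norm x)\<^sup>2" by (rule nonneg_quadratic_imp_discrim_le) simp
  then have "(cmod z)\<^sup>2 \<le> (norm x * norm y)\<^sup>2" by (simp add: power_mult_distrib mult.commute)
  then show ?thesis unfolding z_def by (rule power2_le_imp_le) simp
qed

lemma bounded_bilinear_cinner: "bounded_bilinear cinner"
proof
  show "\<exists>K. \<forall>a b. norm (cinner a b) \<le> norm a * norm b * K"
    by (rule exI[of _ 1]) (simp add: norm_cinner_le)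
qed (simp_all add: cinner_add_left cinner_add_right cinner_scaleR_left cinner_scaleR_right
    scaleR_conv_of_real)

lemmas tendsto_cinner = bounded_bilinear.tendsto[OF bounded_bilinear_cinner]

lemma parallelogram_law:
  fixes a b :: "'a::complex_inner"
  shows "(norm (a + b))\<^sup>2 + (norm (a - b))\<^sup>2 = 2 * (norm a)\<^sup>2 + 2 * (norm b)\<^sup>2"
  using norm_add_scaleR_sq[of a 1 b] norm_add_scaleR_sq[of a "-1" b] by simp

lemma Cauchy_iff_tendsto_norm_diff_sq:
  fixes v :: "nat \<Rightarrow> 'a::real_normed_vector"
  shows "Cauchy v \<longleftrightarrow>
    ((\<lambda>(n, m). (norm (v n - v m))\<^sup>2) \<longlongrightarrow> 0) (sequentially \<times>\<^sub>F sequentially)"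
proof
  assume "Cauchy v"
  show "((\<lambda>(n, m). (norm (v n - v m))\<^sup>2) \<longlongrightarrow> 0) (sequentially \<times>\<^sub>F sequentially)"
  proof (rule tendstoI)
    fix e :: real assume "e > 0"
    with \<open>Cauchy v\<close> obtain N where N: "\<And>m n. m \<ge> N \<Longrightarrow> n \<ge> N \<Longrightarrow> dist (v m) (v n) < sqrt e"
      unfolding Cauchy_def by (meson real_sqrt_gt_zero)
    show "\<forall>\<^sub>F p in sequentially \<times>\<^sub>F sequentially. dist ((\<lambda>(n, m). (norm (v n - v m))\<^sup>2) p) 0 < e"
      unfolding eventually_prod_sequentially
    proof (intro exI allI impI)
      fix m n assume "m \<ge> N" "n \<ge> N"
      then have "norm (v n - v m) < sqrt e" using N[of n m] by (simp add: dist_norm)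
      then have "(norm (v n - v m))\<^sup>2 < (sqrt e)\<^sup>2" by (intro power_strict_mono) auto
      then show "dist ((\<lambda>(n, m). (norm (v n - v m))\<^sup>2) (n, m)) 0 < e" using \<open>e > 0\<close> by simp
    qed
  qed
next
  assume lim: "((\<lambda>(n, m). (norm (v n - v m))\<^sup>2) \<longlongrightarrow> 0) (sequentially \<times>\<^sub>F sequentially)"
  show "Cauchy v" unfolding Cauchy_def
  proof (intro allI impI)
    fix e :: real assume "e > 0"
    from tendstoD[OF lim, of "e\<^sup>2"] \<open>e > 0\<close> obtain N
      where N: "\<And>m n. m \<ge> N \<Longrightarrow> n \<ge> N \<Longrightarrow> (norm (v n - v m))\<^sup>2 < e\<^sup>2"
      unfolding eventually_prod_sequentially by auto
    show "\<exists>M. \<forall>m\<ge>M. \<forall>n\<ge>M. dist (v m) (v n) < e"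
    proof (intro exI allI impI)
      fix m n assume "m \<ge> N" "n \<ge> N"
      then have "(norm (v m - v n))\<^sup>2 < e\<^sup>2" using N[of n m] by simp
      then show "dist (v m) (v n) < e" using \<open>e > 0\<close> by (simp add: dist_norm power_less_imp_less_base)
    qed
  qed
qed

lemma Cauchy_iff_tendsto_weighted_norm_diff_sq:
  fixes u :: "nat \<Rightarrow> 'a::real_normed_vector" and v :: "nat \<Rightarrow> 'b::real_normed_vector"
  assumes "Cauchy u"
  shows "Cauchy v \<longleftrightarrow>
    ((\<lambda>(n, m). complex_of_real (c * (norm (u n - u m))\<^sup>2 + (norm (v n - v m))\<^sup>2)) \<longlongrightarrow> 0)
      (sequentially \<times>\<^sub>F sequentially)"
proof -
  let ?F = "sequentially \<times>\<^sub>F sequentially"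
  let ?a = "\<lambda>(n, m). c * (norm (u n - u m))\<^sup>2" and ?b = "\<lambda>(n, m). (norm (v n - v m))\<^sup>2"
  have a: "(?a \<longlongrightarrow> 0) ?F"
    using tendsto_mult_right_zero[OF assms[unfolded Cauchy_iff_tendsto_norm_diff_sq], of c]
    by (simp add: split_def)
  have "(?b \<longlongrightarrow> 0) ?F \<longleftrightarrow> ((\<lambda>p. ?a p + ?b p) \<longlongrightarrow> 0) ?F"
    using tendsto_add[OF a, of ?b 0] tendsto_diff[OF _ a, of "\<lambda>p. ?a p + ?b p" 0] by auto
  also have "\<dots> \<longleftrightarrow> ((\<lambda>p. complex_of_real (?a p + ?b p)) \<longlongrightarrow> of_real 0) ?F"
    by (rule tendsto_of_real_iff[symmetric])
  finally show ?thesis by (simp add: Cauchy_iff_tendsto_norm_diff_sq split_def)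
qed

lemma tendsto_power2_zero_iff: "((\<lambda>x. (f x)\<^sup>2) \<longlongrightarrow> 0) F \<longleftrightarrow> (f \<longlongrightarrow> (0::real)) F"
proof
  assume "((\<lambda>x. (f x)\<^sup>2) \<longlongrightarrow> 0) F"
  from tendsto_real_sqrt[OF this] show "(f \<longlongrightarrow> 0) F" by (simp add: tendsto_rabs_zero_iff)
qed (use tendsto_power[of f 0 F 2] in simp)

lemma
  assumes "is_form t"
  shows form_add_mem: "x \<in> fst t \<Longrightarrow> y \<in> fst t \<Longrightarrow> x + y \<in> fst t"
    and form_scaleC_mem: "x \<in> fst t \<Longrightarrow> a *\<^sub>C x \<in> fst t"
    and form_add_left: "x \<in> fst t \<Longrightarrow> y \<in> fst t \<Longrightarrow> z \<in> fst t \<Longrightarrow>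
      snd t (x + y) z = snd t x z + snd t y z"
    and form_add_right: "x \<in> fst t \<Longrightarrow> y \<in> fst t \<Longrightarrow> z \<in> fst t \<Longrightarrow>
      snd t z (x + y) = snd t z x + snd t z y"
    and form_scaleC_left: "x \<in> fst t \<Longrightarrow> y \<in> fst t \<Longrightarrow> snd t (a *\<^sub>C x) y = a * snd t x y"
    and form_scaleC_right: "x \<in> fst t \<Longrightarrow> y \<in> fst t \<Longrightarrow> snd t x (a *\<^sub>C y) = cnj a * snd t x y"
    and form_outside: "x \<notin> fst t \<or> y \<notin> fst t \<Longrightarrow> snd t x y = 0"
  using assms unfolding is_form_def by (elim conjE; simp)+

lemma form_diff_mem: "is_form t \<Longrightarrow> x \<in> fst t \<Longrightarrow> y \<in> fst t \<Longrightarrow> x - y \<in> fst t"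
  using form_add_mem[of t x "(-1) *\<^sub>C y"] form_scaleC_mem[of t y "-1"]
  by (simp add: scaleC_minus_one_left)

lemma form_add_scaleC_diag:
  assumes t: "is_form t" and x: "x \<in> fst t" and y: "y \<in> fst t"
  shows "snd t (x + a *\<^sub>C y) (x + a *\<^sub>C y) =
    snd t x x + cnj a * snd t x y + a * snd t y x + a * cnj a * snd t y y"
proof -
  have ay: "a *\<^sub>C y \<in> fst t" using t y by (rule form_scaleC_mem)
  have s: "x + a *\<^sub>C y \<in> fst t" using t x ay by (rule form_add_mem)
  have "snd t (x + a *\<^sub>C y) (x + a *\<^sub>C y) = snd t x (x + a *\<^sub>C y) + snd t (a *\<^sub>C y) (x + a *\<^sub>C y)"
    using form_add_left[OF t x ay s] .
  also have "snd t x (x + a *\<^sub>C y) = snd t x x + cnj a * snd t x y"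
    using form_add_right[OF t x ay x] form_scaleC_right[OF t x y] by simp
  also have "snd t (a *\<^sub>C y) (x + a *\<^sub>C y) = a * snd t y x + a * (cnj a * snd t y y)"
    using form_add_right[OF t x ay ay] form_scaleC_left[OF t y x] form_scaleC_left[OF t y ay]
      form_scaleC_right[OF t y y] by simp
  finally show ?thesis by (simp add: algebra_simps)
qed

lemma form_polarization:
  assumes "is_form t" "x \<in> fst t" "y \<in> fst t"
  shows "4 * snd t x y =
    snd t (x + 1 *\<^sub>C y) (x + 1 *\<^sub>C y) - snd t (x + (-1) *\<^sub>C y) (x + (-1) *\<^sub>C y)
    + \<i> * snd t (x + \<i> *\<^sub>C y) (x + \<i> *\<^sub>C y) - \<i> * snd t (x + (-\<i>) *\<^sub>C y) (x + (-\<i>) *\<^sub>C y)"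
  unfolding form_add_scaleC_diag[OF assms] by (simp add: algebra_simps)

lemma hermitian_form_diag_real:
  assumes "\<forall>x y. snd t x y = cnj (snd t y x)"
  shows "snd t x x = of_real (Re (snd t x x))"
proof (rule complex_eqI)
  show "Im (snd t x x) = Im (of_real (Re (snd t x x)))"
    using arg_cong[OF assms[rule_format, of x x], of Im] by simp
qed simp

lemma form_Cauchy_Schwarz_shifted:
  assumes t: "is_form t" and herm: "\<forall>x y. snd t x y = cnj (snd t y x)"
    and lb: "\<forall>z \<in> fst t. c2 * (norm z)\<^sup>2 \<le> Re (snd t z z)"
    and x: "x \<in> fst t" and y: "y \<in> fst t"
  shows "(Re (snd t x y) - c2 * Re (cinner x y))\<^sup>2 \<le>
     (Re (snd t y y) - c2 * (norm y)\<^sup>2) * (Re (snd t x x) - c2 * (norm x)\<^sup>2)"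
proof (rule nonneg_quadratic_imp_discrim_le)
  fix r :: real
  have z: "x + of_real r *\<^sub>C y \<in> fst t" using t x y by (intro form_add_mem form_scaleC_mem)
  have "0 \<le> Re (snd t (x + of_real r *\<^sub>C y) (x + of_real r *\<^sub>C y)) - c2 * (norm (x + of_real r *\<^sub>C y))\<^sup>2"
    using lb z by auto
  also have "Re (snd t (x + of_real r *\<^sub>C y) (x + of_real r *\<^sub>C y)) =
      Re (snd t x x) + 2 * r * Re (snd t x y) + r\<^sup>2 * Re (snd t y y)"
    unfolding form_add_scaleC_diag[OF t x y] using herm[rule_format, of y x]
    by (simp add: power2_eq_square)
  also have "(norm (x + of_real r *\<^sub>C y))\<^sup>2 = (norm x)\<^sup>2 + 2 * r * Re (cinner x y) + r\<^sup>2 * (norm y)\<^sup>2"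
    using norm_add_scaleR_sq[of x r y] cinner_commute[of y x] by (simp add: scaleR_scaleC)
  finally show "0 \<le> (Re (snd t y y) - c2 * (norm y)\<^sup>2) * r\<^sup>2 +
      2 * (Re (snd t x y) - c2 * Re (cinner x y)) * r + (Re (snd t x x) - c2 * (norm x)\<^sup>2)"
    by (simp add: algebra_simps)
qed (use lb y in auto)

lemma
  assumes "closed_form t"
  shows closed_form_is_form: "is_form t"
    and closed_form_hermitian: "\<forall>x y. snd t x y = cnj (snd t y x)"
    and closed_form_bdd_below: "\<exists>c. \<forall>x \<in> fst t. c * (norm x)\<^sup>2 \<le> Re (snd t x x)"
    and closed_form_limit: "(\<forall>n. u n \<in> fst t) \<Longrightarrow> u \<longlonglongrightarrow> x \<Longrightarrow>
      ((\<lambda>(n, m). snd t (u n - u m) (u n - u m)) \<longlongrightarrow> 0) (sequentially \<times>\<^sub>F sequentially) \<Longrightarrow>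
      x \<in> fst t \<and> (\<lambda>n. snd t (u n - x) (u n - x)) \<longlonglongrightarrow> 0"
  using assms unfolding closed_form_def by (elim conjE; blast)+

text \<open>The cross term of the expansion around x is controlled by the Cauchy--Schwarz
  inequality for the nonnegative form t - c2.\<close>

lemma closed_form_diag_tendsto:
  assumes t: "closed_form t" and x: "x \<in> fst t" and f: "\<forall>n. f n \<in> fst t" "f \<longlonglongrightarrow> x"
    and lim: "(\<lambda>n. snd t (f n - x) (f n - x)) \<longlonglongrightarrow> 0"
  shows "(\<lambda>n. Re (snd t (f n) (f n))) \<longlonglongrightarrow> Re (snd t x x)"
proof -
  note form = closed_form_is_form[OF t] and herm = closed_form_hermitian[OF t]
  obtain c2 where lb: "\<forall>z\<in>fst t. c2 * (norm z)\<^sup>2 \<le> Re (snd t z z)"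
    using closed_form_bdd_below[OF t] by blast
  define d where "d n = f n - x" for n
  have d: "d n \<in> fst t" for n unfolding d_def using form_diff_mem[OF form] f x by blast
  have d0: "d \<longlonglongrightarrow> 0" unfolding d_def using LIM_zero[OF f(2)] .
  have dd: "(\<lambda>n. Re (snd t (d n) (d n))) \<longlonglongrightarrow> 0"
    using tendsto_Re[OF lim] unfolding d_def by simp
  have "(\<lambda>n. (Re (snd t x x) - c2 * (norm x)\<^sup>2) * (Re (snd t (d n) (d n)) - c2 * (norm (d n))\<^sup>2))
     \<longlonglongrightarrow> (Re (snd t x x) - c2 * (norm x)\<^sup>2) * (0 - c2 * (norm (0::'a))\<^sup>2)"
    by (intro tendsto_intros dd d0)
  then have bound: "(\<lambda>n. (Re (snd t x x) - c2 * (norm x)\<^sup>2) * (Re (snd t (d n) (d n)) - c2 * (norm (d n))\<^sup>2))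
     \<longlonglongrightarrow> 0"
    by simp
  have "(\<lambda>n. (Re (snd t (d n) x) - c2 * Re (cinner (d n) x))\<^sup>2) \<longlonglongrightarrow> 0"
    by (rule tendsto_sandwich[OF _ _ tendsto_const bound])
      (auto intro: always_eventually form_Cauchy_Schwarz_shifted[OF form herm lb d x])
  then have "(\<lambda>n. Re (snd t (d n) x) - c2 * Re (cinner (d n) x)) \<longlonglongrightarrow> 0"
    by (simp add: tendsto_power2_zero_iff)
  from tendsto_add[OF this tendsto_mult[OF tendsto_const tendsto_Re[OF tendsto_cinner[OF d0 tendsto_const]]],
      of c2 x]
  have cross: "(\<lambda>n. Re (snd t (d n) x)) \<longlonglongrightarrow> 0" by simp
  have "Re (snd t (f n) (f n)) = Re (snd t x x) + 2 * Re (snd t (d n) x) + Re (snd t (d n) (d n))" for n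
    using form_add_scaleC_diag[OF form x d, of 1] herm[rule_format, of x "d n"]
    by (simp add: d_def scaleC_one)
  moreover have "(\<lambda>n. Re (snd t x x) + 2 * Re (snd t (d n) x) + Re (snd t (d n) (d n)))
      \<longlonglongrightarrow> Re (snd t x x) + 2 * 0 + 0"
    by (intro tendsto_intros cross dd)
  ultimately show ?thesis by simp
qed

lemma LIMSEQ_if_inverse_close:
  fixes g u :: "nat \<Rightarrow> 'a::real_normed_vector"
  assumes "\<forall>n. norm (g n - u n) < inverse (real (Suc n))" and "u \<longlonglongrightarrow> x"
  shows "g \<longlonglongrightarrow> x"
proof -
  have "(\<lambda>n. g n - u n) \<longlonglongrightarrow> 0"
    using assms(1) by (intro Lim_null_comparison[OF _ LIMSEQ_inverse_real_of_nat] always_eventually)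
      (simp add: less_imp_le)
  from tendsto_add[OF this assms(2)] show ?thesis by simp
qed

lemma
  assumes "linear_rel S"
  shows linear_rel_zero: "(0, 0) \<in> S"
    and linear_rel_add: "(f, g) \<in> S \<Longrightarrow> (f', g') \<in> S \<Longrightarrow> (f + f', g + g') \<in> S"
    and linear_rel_scaleC: "(f, g) \<in> S \<Longrightarrow> (a *\<^sub>C f, a *\<^sub>C g) \<in> S"
  using assms unfolding linear_rel_def by (elim conjE; blast)+

lemma linear_rel_diff:
  "linear_rel S \<Longrightarrow> (f, g) \<in> S \<Longrightarrow> (f', g') \<in> S \<Longrightarrow> (f - f', g - g') \<in> S"
  using linear_rel_add[of S f g "(-1) *\<^sub>C f'" "(-1) *\<^sub>C g'"] linear_rel_scaleC[of S f' g' "-1"]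
  by (simp add: scaleC_minus_one_left)

lemma semibounded_with_lb_imp_lower_bound:
  assumes "semibounded_with_lb S \<gamma>" and "c \<le> \<gamma>"
  shows "is_lower_bound S c"
  unfolding is_lower_bound_def
proof (intro allI impI conjI)
  define L where "L = {c. is_lower_bound S c}"
  have "L \<noteq> {}" and \<gamma>: "\<gamma> = Sup L"
    using assms(1) unfolding semibounded_with_lb_def L_def by auto
  then obtain b where b: "is_lower_bound S b" unfolding L_def by auto
  fix \<phi> \<phi>' assume \<phi>: "(\<phi>, \<phi>') \<in> S"
  show "Im (cinner \<phi>' \<phi>) = 0" using b \<phi> unfolding is_lower_bound_def by blast
  show "c * (norm \<phi>)\<^sup>2 \<le> Re (cinner \<phi>' \<phi>)"
  proof (cases "\<phi> = 0")
    case True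
    then show ?thesis using b \<phi> unfolding is_lower_bound_def by force
  next
    case False
    then have n: "(norm \<phi>)\<^sup>2 > 0" by simp
    \<comment> \<open>the Rayleigh quotient of \<phi> bounds every lower bound, hence also their supremum\<close>
    have "\<gamma> \<le> Re (cinner \<phi>' \<phi>) / (norm \<phi>)\<^sup>2" unfolding \<gamma>
    proof (rule cSup_least[OF \<open>L \<noteq> {}\<close>])
      fix x assume "x \<in> L"
      then have "x * (norm \<phi>)\<^sup>2 \<le> Re (cinner \<phi>' \<phi>)"
        using \<phi> unfolding L_def is_lower_bound_def by blast
      then show "x \<le> Re (cinner \<phi>' \<phi>) / (norm \<phi>)\<^sup>2" using n by (simp add: pos_le_divide_eq)
    qed
    then have "\<gamma> * (norm \<phi>)\<^sup>2 \<le> Re (cinner \<phi>' \<phi>)" using n by (simp add: pos_le_divide_eq)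
    moreover have "c * (norm \<phi>)\<^sup>2 \<le> \<gamma> * (norm \<phi>)\<^sup>2" using assms(2) by (simp add: mult_right_mono)
    ultimately show ?thesis by linarith
  qed
qed

text \<open>Otherwise Im (\<psi>' + t \<eta>, \<psi>) could be made nonzero by a suitable t.\<close>

lemma multivalued_part_orthogonal_Domain:
  assumes S: "linear_rel S" "is_lower_bound S b" and "(0, \<eta>) \<in> S" "\<psi> \<in> Domain S"
  shows "cinner \<eta> \<psi> = 0"
proof -
  have real: "Im (cinner \<phi>' \<phi>) = 0" if "(\<phi>, \<phi>') \<in> S" for \<phi> \<phi>'
    using S(2) that unfolding is_lower_bound_def by blast
  obtain \<psi>' where \<psi>: "(\<psi>, \<psi>') \<in> S" using assms(4) by blast
  have "Im (t * cinner \<eta> \<psi>) = 0" for t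
    using real[OF linear_rel_add[OF S(1) \<psi> linear_rel_scaleC[OF S(1) assms(3), of t]]] real[OF \<psi>]
    by (simp add: cinner_add_left cinner_scaleC_left)
  from this[of 1] this[of \<i>] show ?thesis by (intro complex_eqI) simp_all
qed

lemma form_of_rel_eq_cinner:
  assumes S: "linear_rel S" "is_lower_bound S b" and \<phi>: "(\<phi>, \<phi>') \<in> S" and \<psi>: "\<psi> \<in> Domain S"
  shows "snd (form_of_rel S) \<phi> \<psi> = cinner \<phi>' \<psi>"
proof -
  define \<phi>'' where "\<phi>'' = (SOME \<phi>''. (\<phi>, \<phi>'') \<in> S)"
  have "(\<phi>, \<phi>'') \<in> S" unfolding \<phi>''_def using \<phi> by (rule someI)
  from linear_rel_diff[OF S(1) this \<phi>] have "(0, \<phi>'' - \<phi>') \<in> S" by simp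
  then have "cinner (\<phi>'' - \<phi>') \<psi> = 0" by (rule multivalued_part_orthogonal_Domain[OF S _ \<psi>])
  then show ?thesis
    unfolding form_of_rel_def using \<phi> \<psi> by (auto simp: \<phi>''_def cinner_diff_left)
qed

lemma fst_form_of_rel: "fst (form_of_rel S) = Domain S"
  by (simp add: form_of_rel_def)

locale semibounded_representation =
  fixes S :: "('a::{complex_inner, complete_space} \<times> 'a) set"
    and Q :: "'a \<Rightarrow> 'b::{complex_inner, complete_space}"
    and \<gamma> c :: real
  assumes linear: "linear_rel S"
    and semibounded: "semibounded_with_lb S \<gamma>"
    and le_lower_bound: "c \<le> \<gamma>"
    and representing: "representing_map S c Q"
begin

lemma lower_bound: "is_lower_bound S c"
  using semibounded le_lower_bound by (rule semibounded_with_lb_imp_lower_bound)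

lemma Domain_zero: "0 \<in> Domain S"
  using linear_rel_zero[OF linear] by blast

lemma Domain_add: "x \<in> Domain S \<Longrightarrow> y \<in> Domain S \<Longrightarrow> x + y \<in> Domain S"
  using linear_rel_add[OF linear] by blast

lemma Domain_scaleC: "x \<in> Domain S \<Longrightarrow> a *\<^sub>C x \<in> Domain S"
  using linear_rel_scaleC[OF linear] by blast

lemma Domain_diff: "x \<in> Domain S \<Longrightarrow> y \<in> Domain S \<Longrightarrow> x - y \<in> Domain S"
  using linear_rel_diff[OF linear] by blast

lemma
  shows Q_add: "x \<in> Domain S \<Longrightarrow> y \<in> Domain S \<Longrightarrow> Q (x + y) = Q x + Q y"
    and Q_scaleC: "x \<in> Domain S \<Longrightarrow> Q (a *\<^sub>C x) = a *\<^sub>C Q x"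
    and form_of_rel_eq_Q: "x \<in> Domain S \<Longrightarrow> y \<in> Domain S \<Longrightarrow>
      snd (form_of_rel S) x y = of_real c * cinner x y + cinner (Q x) (Q y)"
  using representing unfolding representing_map_def by (elim conjE; blast)+

lemma Q_diff: "x \<in> Domain S \<Longrightarrow> y \<in> Domain S \<Longrightarrow> Q (x - y) = Q x - Q y"
  using Q_add[of x "(-1) *\<^sub>C y"] Q_scaleC[of y "-1"] Domain_scaleC[of y "-1"]
  by (simp add: scaleC_minus_one_left)

lemma cinner_eq_Q: "(\<phi>, \<phi>') \<in> S \<Longrightarrow> \<psi> \<in> Domain S \<Longrightarrow>
    cinner \<phi>' \<psi> = of_real c * cinner \<phi> \<psi> + cinner (Q \<phi>) (Q \<psi>)"
  using form_of_rel_eq_cinner[OF linear lower_bound] form_of_rel_eq_Q by (metis Domain.DomainI)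

lemma cinner_shift_self: "(\<phi>, \<phi>') \<in> S \<Longrightarrow> cinner (\<phi>' - c *\<^sub>R \<phi>) \<phi> = of_real ((norm (Q \<phi>))\<^sup>2)"
  using cinner_eq_Q[of \<phi> \<phi>' \<phi>] Domain.DomainI[of \<phi> \<phi>' S] by (auto simp: cinner_diff_left cinner_scaleR_left cinner_self)

lemma cinner_diff_pairs:
  assumes "(f, f') \<in> S" "(g, g') \<in> S"
  shows "cinner (f' - g') (f - g) = of_real (c * (norm (f - g))\<^sup>2 + (norm (Q f - Q g))\<^sup>2)"
proof -
  have "(f - g, f' - g') \<in> S" using linear assms by (rule linear_rel_diff)
  then show ?thesis using cinner_eq_Q[of "f - g" "f' - g'" "f - g"] Q_diff[of f g] assms
    by (auto simp: cinner_self Domain.DomainI)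
qed

lemma Q_closable:
  assumes f: "\<forall>n. f n \<in> Domain S" "f \<longlonglongrightarrow> 0" and h: "(\<lambda>n. Q (f n)) \<longlonglongrightarrow> h"
  shows "h = 0"
proof -
  have orth: "cinner h (Q \<psi>) = 0" if "\<psi> \<in> Domain S" for \<psi>
  proof -
    obtain \<psi>' where \<psi>: "(\<psi>, \<psi>') \<in> S" using \<open>\<psi> \<in> Domain S\<close> by blast
    have eq: "cinner (Q (f n)) (Q \<psi>) = cnj (cinner \<psi>' (f n) - of_real c * cinner \<psi> (f n))" for n
      using cinner_eq_Q[OF \<psi>, of "f n"] f(1) cinner_commute[of "Q (f n)" "Q \<psi>"] by simp
    have "(\<lambda>n. cnj (cinner \<psi>' (f n) - of_real c * cinner \<psi> (f n)))
        \<longlonglongrightarrow> cnj (cinner \<psi>' 0 - of_real c * cinner \<psi> 0)"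
      by (intro tendsto_intros tendsto_cinner f(2))
    then have "(\<lambda>n. cinner (Q (f n)) (Q \<psi>)) \<longlonglongrightarrow> 0" unfolding eq by simp
    moreover have "(\<lambda>n. cinner (Q (f n)) (Q \<psi>)) \<longlonglongrightarrow> cinner h (Q \<psi>)"
      by (intro tendsto_cinner h tendsto_const)
    ultimately show ?thesis using LIMSEQ_unique by blast
  qed
  have "(\<lambda>n. cinner h (Q (f n))) \<longlonglongrightarrow> cinner h h" by (intro tendsto_cinner h tendsto_const)
  then have "cinner h h = 0" using orth f(1) by (simp add: LIMSEQ_const_iff)
  then show ?thesis by (simp add: cinner_self_eq_zero)
qed

lemma form_of_rel_diag:
  "x \<in> Domain S \<Longrightarrow> snd (form_of_rel S) x x = of_real (c * (norm x)\<^sup>2 + (norm (Q x))\<^sup>2)"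
  by (simp add: form_of_rel_eq_Q cinner_self)

definition Qbar_dom :: "'a set" where
  "Qbar_dom = {x. \<exists>f. (\<forall>n. f n \<in> Domain S) \<and> f \<longlonglongrightarrow> x \<and> convergent (\<lambda>n. Q (f n))}"

definition Qbar :: "'a \<Rightarrow> 'b" where
  "Qbar x = (THE h. \<exists>f. (\<forall>n. f n \<in> Domain S) \<and> f \<longlonglongrightarrow> x \<and> (\<lambda>n. Q (f n)) \<longlonglongrightarrow> h)"

lemma Q_limit_unique:
  assumes "\<forall>n. f n \<in> Domain S" "f \<longlonglongrightarrow> x" "(\<lambda>n. Q (f n)) \<longlonglongrightarrow> h"
    and "\<forall>n. g n \<in> Domain S" "g \<longlonglongrightarrow> x" "(\<lambda>n. Q (g n)) \<longlonglongrightarrow> h'"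
  shows "h = h'"
proof -
  have "h - h' = 0"
  proof (rule Q_closable)
    show "\<forall>n. f n - g n \<in> Domain S" using assms Domain_diff by blast
    show "(\<lambda>n. f n - g n) \<longlonglongrightarrow> 0" using tendsto_diff[OF assms(2,5)] by simp
    show "(\<lambda>n. Q (f n - g n)) \<longlonglongrightarrow> h - h'"
      using tendsto_diff[OF assms(3,6)] assms(1,4) Q_diff by simp
  qed
  then show ?thesis by simp
qed

lemma Qbar_limit:
  assumes "\<forall>n. f n \<in> Domain S" "f \<longlonglongrightarrow> x" "(\<lambda>n. Q (f n)) \<longlonglongrightarrow> h"
  shows "x \<in> Qbar_dom" and "Qbar x = h"
proof -
  show "x \<in> Qbar_dom" unfolding Qbar_dom_def using assms convergentI by blast
  show "Qbar x = h" unfolding Qbar_def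
  proof (rule the_equality)
    show "\<exists>f. (\<forall>n. f n \<in> Domain S) \<and> f \<longlonglongrightarrow> x \<and> (\<lambda>n. Q (f n)) \<longlonglongrightarrow> h"
      using assms by blast
    fix h' assume "\<exists>g. (\<forall>n. g n \<in> Domain S) \<and> g \<longlonglongrightarrow> x \<and> (\<lambda>n. Q (g n)) \<longlonglongrightarrow> h'"
    then show "h' = h" using Q_limit_unique[OF assms] by metis
  qed
qed

lemma Qbar_domE:
  assumes "x \<in> Qbar_dom"
  obtains f where "\<forall>n. f n \<in> Domain S" "f \<longlonglongrightarrow> x" "(\<lambda>n. Q (f n)) \<longlonglongrightarrow> Qbar x"
proof -
  obtain f h where f: "\<forall>n. f n \<in> Domain S" "f \<longlonglongrightarrow> x" "(\<lambda>n. Q (f n)) \<longlonglongrightarrow> h"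
    using assms unfolding Qbar_dom_def convergent_def by blast
  with Qbar_limit(2)[OF f] show ?thesis using that by blast
qed

lemma
  assumes "x \<in> Domain S"
  shows Domain_subset_Qbar_dom: "x \<in> Qbar_dom" and Qbar_eq_Q: "Qbar x = Q x"
  using Qbar_limit[of "\<lambda>n. x" x "Q x"] assms by simp_all

lemma
  assumes "x \<in> Qbar_dom" "y \<in> Qbar_dom"
  shows Qbar_dom_add: "x + y \<in> Qbar_dom" and Qbar_add: "Qbar (x + y) = Qbar x + Qbar y"
proof -
  obtain f where f: "\<forall>n. f n \<in> Domain S" "f \<longlonglongrightarrow> x" "(\<lambda>n. Q (f n)) \<longlonglongrightarrow> Qbar x"
    using assms(1) by (rule Qbar_domE)
  obtain g where g: "\<forall>n. g n \<in> Domain S" "g \<longlonglongrightarrow> y" "(\<lambda>n. Q (g n)) \<longlonglongrightarrow> Qbar y"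
    using assms(2) by (rule Qbar_domE)
  have "\<forall>n. f n + g n \<in> Domain S" using f g Domain_add by blast
  moreover have "(\<lambda>n. f n + g n) \<longlonglongrightarrow> x + y" using f g by (intro tendsto_add) auto
  moreover have "(\<lambda>n. Q (f n + g n)) \<longlonglongrightarrow> Qbar x + Qbar y"
    using tendsto_add[OF f(3) g(3)] f g Q_add by simp
  ultimately show "x + y \<in> Qbar_dom" "Qbar (x + y) = Qbar x + Qbar y" by (rule Qbar_limit)+
qed

lemma
  assumes "x \<in> Qbar_dom"
  shows Qbar_dom_scaleC: "a *\<^sub>C x \<in> Qbar_dom" and Qbar_scaleC: "Qbar (a *\<^sub>C x) = a *\<^sub>C Qbar x"
proof -
  obtain f where f: "\<forall>n. f n \<in> Domain S" "f \<longlonglongrightarrow> x" "(\<lambda>n. Q (f n)) \<longlonglongrightarrow> Qbar x"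
    using assms by (rule Qbar_domE)
  have "\<forall>n. a *\<^sub>C f n \<in> Domain S" using f Domain_scaleC by blast
  moreover have "(\<lambda>n. a *\<^sub>C f n) \<longlonglongrightarrow> a *\<^sub>C x" using f by (intro tendsto_scaleC) auto
  moreover have "(\<lambda>n. Q (a *\<^sub>C f n)) \<longlonglongrightarrow> a *\<^sub>C Qbar x"
    using tendsto_scaleC[OF f(3)] f Q_scaleC by simp
  ultimately show "a *\<^sub>C x \<in> Qbar_dom" "Qbar (a *\<^sub>C x) = a *\<^sub>C Qbar x" by (rule Qbar_limit)+
qed

lemma
  assumes "x \<in> Qbar_dom" "y \<in> Qbar_dom"
  shows Qbar_dom_diff: "x - y \<in> Qbar_dom" and Qbar_diff: "Qbar (x - y) = Qbar x - Qbar y"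
  using Qbar_dom_add[OF assms(1) Qbar_dom_scaleC[OF assms(2)], of "-1"]
    Qbar_add[OF assms(1) Qbar_dom_scaleC[OF assms(2)], of "-1"] Qbar_scaleC[OF assms(2), of "-1"]
  by (simp_all add: scaleC_minus_one_left)

lemma Qbar_closed:
  assumes u: "\<forall>n. u n \<in> Qbar_dom" "u \<longlonglongrightarrow> x" and h: "(\<lambda>n. Qbar (u n)) \<longlonglongrightarrow> h"
  shows "x \<in> Qbar_dom" and "Qbar x = h"
proof -
  have "\<exists>g \<in> Domain S. norm (g - u n) < inverse (real (Suc n)) \<and>
      norm (Q g - Qbar (u n)) < inverse (real (Suc n))" for n
  proof -
    obtain f where f: "\<forall>k. f k \<in> Domain S" "f \<longlonglongrightarrow> u n" "(\<lambda>k. Q (f k)) \<longlonglongrightarrow> Qbar (u n)"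
      using u(1) Qbar_domE by blast
    have "\<forall>\<^sub>F k in sequentially. norm (f k - u n) < inverse (real (Suc n)) \<and>
        norm (Q (f k) - Qbar (u n)) < inverse (real (Suc n))"
      using tendstoD[OF f(2), of "inverse (real (Suc n))"] tendstoD[OF f(3), of "inverse (real (Suc n))"]
      by (simp add: dist_norm eventually_conj)
    then obtain N where "norm (f N - u n) < inverse (real (Suc n))"
        "norm (Q (f N) - Qbar (u n)) < inverse (real (Suc n))"
      unfolding eventually_sequentially by blast
    then show ?thesis using f(1) by blast
  qed
  then obtain g where g: "\<forall>n. g n \<in> Domain S" "\<forall>n. norm (g n - u n) < inverse (real (Suc n))"
      "\<forall>n. norm (Q (g n) - Qbar (u n)) < inverse (real (Suc n))"
    by metis
  have "g \<longlonglongrightarrow> x" using g(2) u(2) by (rule LIMSEQ_if_inverse_close)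
  moreover have "(\<lambda>n. Q (g n)) \<longlonglongrightarrow> h" using g(3) h by (rule LIMSEQ_if_inverse_close)
  ultimately show "x \<in> Qbar_dom" "Qbar x = h" using g(1) by (auto intro: Qbar_limit)
qed

definition tbar :: "'a form" where
  "tbar = (Qbar_dom, \<lambda>x y. if x \<in> Qbar_dom \<and> y \<in> Qbar_dom
      then of_real c * cinner x y + cinner (Qbar x) (Qbar y) else 0)"

lemma fst_tbar [simp]: "fst tbar = Qbar_dom"
  by (simp add: tbar_def)

lemma tbar_eq: "x \<in> Qbar_dom \<Longrightarrow> y \<in> Qbar_dom \<Longrightarrow>
    snd tbar x y = of_real c * cinner x y + cinner (Qbar x) (Qbar y)"
  by (simp add: tbar_def)

lemma tbar_diag: "x \<in> Qbar_dom \<Longrightarrow> snd tbar x x = of_real (c * (norm x)\<^sup>2 + (norm (Qbar x))\<^sup>2)"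
  by (simp add: tbar_eq cinner_self)

lemma tbar_is_form: "is_form tbar"
  unfolding is_form_def fst_tbar
proof (intro conjI allI impI)
  show "0 \<in> Qbar_dom" using Domain_subset_Qbar_dom Domain_zero by blast
  fix x y z a
  show "x \<in> Qbar_dom \<Longrightarrow> y \<in> Qbar_dom \<Longrightarrow> x + y \<in> Qbar_dom" by (rule Qbar_dom_add)
  show "x \<in> Qbar_dom \<Longrightarrow> a *\<^sub>C x \<in> Qbar_dom" by (rule Qbar_dom_scaleC)
  show "x \<notin> Qbar_dom \<or> y \<notin> Qbar_dom \<Longrightarrow> snd tbar x y = 0" by (auto simp: tbar_def)
  assume "x \<in> Qbar_dom" "y \<in> Qbar_dom"
  then show "snd tbar (a *\<^sub>C x) y = a * snd tbar x y" "snd tbar x (a *\<^sub>C y) = cnj a * snd tbar x y"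
    by (simp_all add: tbar_eq Qbar_dom_scaleC Qbar_scaleC cinner_scaleC_left cinner_scaleC_right
        algebra_simps)
  assume "z \<in> Qbar_dom"
  with \<open>x \<in> Qbar_dom\<close> \<open>y \<in> Qbar_dom\<close>
  show "snd tbar (x + y) z = snd tbar x z + snd tbar y z" "snd tbar z (x + y) = snd tbar z x + snd tbar z y"
    by (simp_all add: tbar_eq Qbar_dom_add Qbar_add cinner_add_left cinner_add_right algebra_simps)
qed

lemma tbar_hermitian: "snd tbar x y = cnj (snd tbar y x)"
  using cinner_commute[of x y] cinner_commute[of "Qbar x" "Qbar y"] by (simp add: tbar_def)

lemma tbar_closed: "closed_form tbar"
  unfolding closed_form_def
proof (intro conjI allI impI)
  show "is_form tbar" by (rule tbar_is_form)
  show "snd tbar x y = cnj (snd tbar y x)" for x y by (rule tbar_hermitian)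
  show "\<exists>b. \<forall>x\<in>fst tbar. b * (norm x)\<^sup>2 \<le> Re (snd tbar x x)"
    by (rule exI[of _ c]) (simp add: tbar_diag)
  fix u x assume u: "\<forall>n. u n \<in> fst tbar" "u \<longlonglongrightarrow> x"
    and lim: "((\<lambda>(n, m). snd tbar (u n - u m) (u n - u m)) \<longlongrightarrow> 0) (sequentially \<times>\<^sub>F sequentially)"
  have "snd tbar (u n - u m) (u n - u m) =
      of_real (c * (norm (u n - u m))\<^sup>2 + (norm (Qbar (u n) - Qbar (u m)))\<^sup>2)" for n m
    using u(1) by (simp add: tbar_diag Qbar_dom_diff Qbar_diff)
  with lim have "Cauchy (\<lambda>n. Qbar (u n))"
    unfolding Cauchy_iff_tendsto_weighted_norm_diff_sq[OF LIMSEQ_imp_Cauchy[OF u(2)], where c = c]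
    by simp
  then obtain h where h: "(\<lambda>n. Qbar (u n)) \<longlonglongrightarrow> h" by (auto simp: Cauchy_convergent_iff convergent_def)
  have x: "x \<in> Qbar_dom" and Qx: "Qbar x = h" using Qbar_closed[OF _ u(2) h] u(1) by auto
  have "(\<lambda>n. complex_of_real (c * (norm (u n - x))\<^sup>2 + (norm (Qbar (u n) - h))\<^sup>2))
      \<longlonglongrightarrow> of_real (c * (norm (0::'a))\<^sup>2 + (norm (0::'b))\<^sup>2)"
    by (intro tendsto_intros LIM_zero u(2) h)
  then show "(\<lambda>n. snd tbar (u n - x) (u n - x)) \<longlonglongrightarrow> 0"
    using u(1) x by (simp add: tbar_diag Qbar_dom_diff Qbar_diff Qx)
  show "x \<in> fst tbar" using x by simp
qed

lemma tbar_extends: "form_extends (form_of_rel S) tbar"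
  unfolding form_extends_def fst_form_of_rel fst_tbar
  by (simp add: subsetI Domain_subset_Qbar_dom tbar_eq Qbar_eq_Q form_of_rel_eq_Q)

text \<open>Approximating x by a sequence from Domain S with convergent Q-images, the values
  of both forms on this sequence converge to their values at x.\<close>

lemma closed_extension_diag:
  assumes t: "closed_form t" "form_extends (form_of_rel S) t" and x: "x \<in> Qbar_dom"
  shows "x \<in> fst t" and "snd t x x = snd tbar x x"
proof -
  have sub: "Domain S \<subseteq> fst t"
    and agree: "\<And>x y. x \<in> Domain S \<Longrightarrow> y \<in> Domain S \<Longrightarrow> snd t x y = snd (form_of_rel S) x y"
    using t(2) unfolding form_extends_def fst_form_of_rel by auto
  obtain f where f: "\<forall>n. f n \<in> Domain S" "f \<longlonglongrightarrow> x" "(\<lambda>n. Q (f n)) \<longlonglongrightarrow> Qbar x"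
    using x by (rule Qbar_domE)
  have "snd t (f n - f m) (f n - f m) = of_real (c * (norm (f n - f m))\<^sup>2 + (norm (Q (f n) - Q (f m)))\<^sup>2)"
    for n m
    using f(1) by (simp add: agree Domain_diff form_of_rel_diag Q_diff)
  then have "((\<lambda>(n, m). snd t (f n - f m) (f n - f m)) \<longlongrightarrow> 0) (sequentially \<times>\<^sub>F sequentially)"
    using LIMSEQ_imp_Cauchy[OF f(3)]
    unfolding Cauchy_iff_tendsto_weighted_norm_diff_sq[OF LIMSEQ_imp_Cauchy[OF f(2)], where c = c]
    by simp
  with closed_form_limit[OF t(1)] f(1,2) sub
  have xt: "x \<in> fst t" and lim: "(\<lambda>n. snd t (f n - x) (f n - x)) \<longlonglongrightarrow> 0" by blast+
  then show "x \<in> fst t" by blast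
  have "(\<lambda>n. Re (snd t (f n) (f n))) \<longlonglongrightarrow> Re (snd t x x)"
    using closed_form_diag_tendsto[OF t(1) xt _ f(2) lim] f(1) sub by blast
  moreover have "(\<lambda>n. Re (snd t (f n) (f n))) \<longlonglongrightarrow> c * (norm x)\<^sup>2 + (norm (Qbar x))\<^sup>2"
    using f(1) by (simp add: agree form_of_rel_diag) (intro tendsto_intros f(2,3))
  ultimately have "Re (snd t x x) = c * (norm x)\<^sup>2 + (norm (Qbar x))\<^sup>2"
    by (rule LIMSEQ_unique)
  then show "snd t x x = snd tbar x x"
    using hermitian_form_diag_real[OF closed_form_hermitian[OF t(1)], of x] x by (simp add: tbar_diag)
qed

lemma tbar_minimal:
  assumes t: "closed_form t" "form_extends (form_of_rel S) t"
  shows "form_extends tbar t"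
  unfolding form_extends_def fst_tbar
proof (intro conjI allI impI subsetI)
  show "x \<in> fst t" if "x \<in> Qbar_dom" for x using closed_extension_diag(1)[OF t that] .
  fix x y assume x: "x \<in> Qbar_dom" and y: "y \<in> Qbar_dom"
  have "x + a *\<^sub>C y \<in> Qbar_dom" for a using x y by (intro Qbar_dom_add Qbar_dom_scaleC)
  then have diag: "snd t (x + a *\<^sub>C y) (x + a *\<^sub>C y) = snd tbar (x + a *\<^sub>C y) (x + a *\<^sub>C y)" for a
    by (rule closed_extension_diag(2)[OF t])
  have "4 * snd t x y = 4 * snd tbar x y"
    using form_polarization[OF closed_form_is_form[OF t(1)] closed_extension_diag(1)[OF t x]
        closed_extension_diag(1)[OF t y]]
      form_polarization[OF tbar_is_form, of x y] x y
    by (simp add: diag)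
  then show "snd t x y = snd tbar x y" by simp
qed

lemma form_closure_eq_tbar: "form_closure (form_of_rel S) = tbar"
  unfolding form_closure_def
proof (rule the_equality)
  show "closed_form tbar \<and> form_extends (form_of_rel S) tbar \<and>
      (\<forall>t. closed_form t \<and> form_extends (form_of_rel S) t \<longrightarrow> form_extends tbar t)"
    using tbar_closed tbar_extends tbar_minimal by blast
  fix t assume t: "closed_form t \<and> form_extends (form_of_rel S) t \<and>
      (\<forall>t'. closed_form t' \<and> form_extends (form_of_rel S) t' \<longrightarrow> form_extends t t')"
  then have "form_extends t tbar" and "form_extends tbar t"
    using tbar_closed tbar_extends tbar_minimal by blast+
  then have dom: "fst t = Qbar_dom" and "\<forall>x \<in> Qbar_dom. \<forall>y \<in> Qbar_dom. snd t x y = snd tbar x y"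
    unfolding form_extends_def by auto
  moreover have "snd t x y = snd tbar x y" if "x \<notin> Qbar_dom \<or> y \<notin> Qbar_dom" for x y
    using form_outside[OF closed_form_is_form, of t x y] form_outside[OF tbar_is_form, of x y] t dom that
    by simp
  ultimately show "t = tbar" by (metis fst_tbar prod_eqI ext)
qed

definition energy :: "'a \<Rightarrow> 'a \<Rightarrow> real" where
  "energy \<phi> \<psi> = (norm (Q \<psi>))\<^sup>2 - 2 * Re (cinner \<psi> \<phi>)"

lemma energy_bdd_below:
  assumes "\<forall>\<psi>\<in>Domain S. cmod (cinner \<psi> \<phi>) \<le> K * norm (Q \<psi>)"
  shows "bdd_below (energy \<phi> ` Domain S)"
proof (rule bdd_belowI2)
  fix \<psi> assume "\<psi> \<in> Domain S"
  with assms have "Re (cinner \<psi> \<phi>) \<le> K * norm (Q \<psi>)" using complex_Re_le_cmod order_trans by blast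
  moreover have "0 \<le> (norm (Q \<psi>) - K)\<^sup>2" by simp
  ultimately show "- K\<^sup>2 \<le> energy \<phi> \<psi>" unfolding energy_def by (simp add: power2_eq_square algebra_simps)
qed

lemma energy_Inf_le:
  "bdd_below (energy \<phi> ` Domain S) \<Longrightarrow> \<psi> \<in> Domain S \<Longrightarrow> Inf (energy \<phi> ` Domain S) \<le> energy \<phi> \<psi>"
  by (rule cInf_lower) auto

lemma energy_parallelogram:
  assumes "x \<in> Domain S" "y \<in> Domain S"
  shows "(norm (Q x - Q y))\<^sup>2 = 2 * energy \<phi> x + 2 * energy \<phi> y - 4 * energy \<phi> ((1/2::real) *\<^sub>R (x + y))"
proof -
  have "Q ((1/2::real) *\<^sub>R (x + y)) = (1/2::real) *\<^sub>R (Q x + Q y)"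
    using assms by (simp add: scaleR_scaleC Q_scaleC Q_add Domain_add)
  moreover have "(norm ((1/2::real) *\<^sub>R (Q x + Q y)))\<^sup>2 = (norm (Q x + Q y))\<^sup>2 / 4"
    by (simp only: norm_scaleR) (simp add: power2_eq_square)
  moreover have "Re (cinner ((1/2::real) *\<^sub>R (x + y)) \<phi>) = (Re (cinner x \<phi>) + Re (cinner y \<phi>)) / 2"
    by (simp add: cinner_scaleR_left cinner_add_left)
  ultimately show ?thesis
    using parallelogram_law[of "Q x" "Q y"] unfolding energy_def by simp
qed

text \<open>By the parallelogram law, since the midpoint of f n and f k lies in Domain S.\<close>

lemma minimizing_sequence_Cauchy:
  assumes bdd: "bdd_below (energy \<phi> ` Domain S)"
    and f: "\<forall>n. f n \<in> Domain S" "\<forall>n. energy \<phi> (f n) \<le> Inf (energy \<phi> ` Domain S) + inverse (real (Suc n))"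
  shows "Cauchy (\<lambda>n. Q (f n))"
proof (rule CauchyI)
  have bound: "(norm (Q (f n) - Q (f k)))\<^sup>2 \<le> 2 * inverse (real (Suc n)) + 2 * inverse (real (Suc k))"
    for n k
  proof -
    have "(1/2::real) *\<^sub>R (f n + f k) \<in> Domain S" using f(1) by (simp add: scaleR_scaleC Domain_add Domain_scaleC)
    then show ?thesis
      using energy_parallelogram[OF f(1)[rule_format, of n] f(1)[rule_format, of k], of \<phi>]
        f(2)[rule_format, of n] f(2)[rule_format, of k] energy_Inf_le[OF bdd] by fastforce
  qed
  fix e :: real assume "e > 0"
  then obtain N where N: "inverse (real (Suc N)) < e\<^sup>2 / 4" using reals_Archimedean[of "e\<^sup>2 / 4"] by auto
  show "\<exists>M. \<forall>m\<ge>M. \<forall>n\<ge>M. norm (Q (f m) - Q (f n)) < e"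
  proof (intro exI allI impI)
    fix p q assume "N \<le> p" "N \<le> q"
    then have "inverse (real (Suc p)) \<le> inverse (real (Suc N))" "inverse (real (Suc q)) \<le> inverse (real (Suc N))"
      by (auto intro!: le_imp_inverse_le)
    then have "(norm (Q (f p) - Q (f q)))\<^sup>2 < e\<^sup>2" using bound[of p q] N by linarith
    then show "norm (Q (f p) - Q (f q)) < e" using \<open>e > 0\<close> by (simp add: power_less_imp_less_base)
  qed
qed

lemma minimizing_sequence_energy_tendsto:
  assumes bdd: "bdd_below (energy \<phi> ` Domain S)"
    and f: "\<forall>n. f n \<in> Domain S" "\<forall>n. energy \<phi> (f n) \<le> Inf (energy \<phi> ` Domain S) + inverse (real (Suc n))"
  shows "(\<lambda>n. energy \<phi> (f n)) \<longlonglongrightarrow> Inf (energy \<phi> ` Domain S)"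
proof (rule tendsto_sandwich[OF _ _ tendsto_const])
  let ?m = "Inf (energy \<phi> ` Domain S)"
  show "\<forall>\<^sub>F n in sequentially. ?m \<le> energy \<phi> (f n)"
    using f(1) energy_Inf_le[OF bdd] by (auto intro: always_eventually)
  show "\<forall>\<^sub>F n in sequentially. energy \<phi> (f n) \<le> ?m + inverse (real (Suc n))"
    using f(2) by (auto intro: always_eventually)
  show "(\<lambda>n. ?m + inverse (real (Suc n))) \<longlonglongrightarrow> ?m"
    using tendsto_add[OF tendsto_const LIMSEQ_inverse_real_of_nat, of ?m] by simp
qed

text \<open>The limit h of a minimizing sequence satisfies the Euler--Lagrange equation of the energy:
  the quadratic t \<mapsto> energy (f n + t g) - Inf stays nonnegative in the limit, so its linear
  coefficient vanishes.\<close>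

lemma minimizer_Re_cinner:
  assumes bdd: "bdd_below (energy \<phi> ` Domain S)"
    and f: "\<forall>n. f n \<in> Domain S" "\<forall>n. energy \<phi> (f n) \<le> Inf (energy \<phi> ` Domain S) + inverse (real (Suc n))"
    and h: "(\<lambda>n. Q (f n)) \<longlonglongrightarrow> h" and g: "g \<in> Domain S"
  shows "Re (cinner (Q g) h) = Re (cinner g \<phi>)"
proof -
  let ?m = "Inf (energy \<phi> ` Domain S)"
  define a where "a = Re (cinner (Q g) h) - Re (cinner g \<phi>)"
  have "0 \<le> (norm (Q g))\<^sup>2 * t\<^sup>2 + 2 * a * t + 0" for t :: real
  proof -
    have "energy \<phi> (f n + t *\<^sub>R g) =
        energy \<phi> (f n) + 2 * t * (Re (cinner (Q g) (Q (f n))) - Re (cinner g \<phi>)) + t\<^sup>2 * (norm (Q g))\<^sup>2" for n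
    proof -
      have "Q (f n + t *\<^sub>R g) = Q (f n) + t *\<^sub>R Q g"
        using f(1) g by (simp add: scaleR_scaleC Q_add Q_scaleC Domain_scaleC)
      then show ?thesis
        using norm_add_scaleR_sq[of "Q (f n)" t "Q g"]
        by (simp add: energy_def cinner_add_left cinner_scaleR_left algebra_simps)
    qed
    moreover have "(\<lambda>n. energy \<phi> (f n) + 2 * t * (Re (cinner (Q g) (Q (f n))) - Re (cinner g \<phi>))
        + t\<^sup>2 * (norm (Q g))\<^sup>2) \<longlonglongrightarrow> ?m + 2 * t * a + t\<^sup>2 * (norm (Q g))\<^sup>2"
      unfolding a_def
      by (intro tendsto_intros minimizing_sequence_energy_tendsto[OF bdd f] tendsto_cinner h)
    moreover have "?m \<le> energy \<phi> (f n + t *\<^sub>R g)" for n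
      using f(1) g by (simp add: energy_Inf_le[OF bdd] scaleR_scaleC Domain_add Domain_scaleC)
    ultimately have "?m \<le> ?m + 2 * t * a + t\<^sup>2 * (norm (Q g))\<^sup>2"
      by (intro LIMSEQ_le_const) auto
    then show ?thesis by (simp add: algebra_simps)
  qed
  then have "a\<^sup>2 \<le> (norm (Q g))\<^sup>2 * 0" by (rule nonneg_quadratic_imp_discrim_le) simp
  then show ?thesis unfolding a_def by simp
qed

lemma minimizer_represents:
  assumes bdd: "bdd_below (energy \<phi> ` Domain S)"
    and f: "\<forall>n. f n \<in> Domain S" "\<forall>n. energy \<phi> (f n) \<le> Inf (energy \<phi> ` Domain S) + inverse (real (Suc n))"
    and h: "(\<lambda>n. Q (f n)) \<longlonglongrightarrow> h" and g: "g \<in> Domain S"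
  shows "cinner \<phi> g = cinner h (Q g)"
proof -
  note Re_eq = minimizer_Re_cinner[OF bdd f h]
  have "Im (cinner (Q g) h) = Im (cinner g \<phi>)"
    using Re_eq[OF Domain_scaleC[OF g, of \<i>]] Q_scaleC[OF g, of \<i>] by (simp add: cinner_scaleC_left)
  with Re_eq[OF g] have "cinner (Q g) h = cinner g \<phi>" by (rule complex_eqI)
  then show ?thesis using cinner_commute[of h "Q g"] cinner_commute[of \<phi> g] by simp
qed

lemma exists_representing_vector:
  assumes "\<forall>\<psi>\<in>Domain S. (cmod (cinner \<psi> \<phi>))\<^sup>2 \<le> C * (norm (Q \<psi>))\<^sup>2"
  shows "\<exists>h. \<forall>g\<in>Domain S. cinner \<phi> g = cinner h (Q g)"
proof -
  define K where "K = sqrt (max C 0)"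
  have "cmod (cinner \<psi> \<phi>) \<le> K * norm (Q \<psi>)" if "\<psi> \<in> Domain S" for \<psi>
  proof (rule power2_le_imp_le)
    have "(cmod (cinner \<psi> \<phi>))\<^sup>2 \<le> max C 0 * (norm (Q \<psi>))\<^sup>2"
      using assms that by (meson max.cobounded1 mult_right_mono order_trans zero_le_power2)
    then show "(cmod (cinner \<psi> \<phi>))\<^sup>2 \<le> (K * norm (Q \<psi>))\<^sup>2" by (simp add: K_def power_mult_distrib)
  qed (simp add: K_def)
  then have bdd: "bdd_below (energy \<phi> ` Domain S)" by (intro energy_bdd_below) blast
  have "energy \<phi> ` Domain S \<noteq> {}" using Domain_zero by blast
  from cInf_lessD[OF this, of "Inf (energy \<phi> ` Domain S) + inverse (real (Suc n))" for n]
  have "\<exists>\<psi> \<in> Domain S. energy \<phi> \<psi> \<le> Inf (energy \<phi> ` Domain S) + inverse (real (Suc n))" for n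
    by (fastforce intro: less_imp_le)
  then obtain f where f: "\<forall>n. f n \<in> Domain S"
      "\<forall>n. energy \<phi> (f n) \<le> Inf (energy \<phi> ` Domain S) + inverse (real (Suc n))"
    by metis
  obtain h where "(\<lambda>n. Q (f n)) \<longlonglongrightarrow> h"
    using minimizing_sequence_Cauchy[OF bdd f] by (auto simp: Cauchy_convergent_iff convergent_def)
  then show ?thesis using minimizer_represents[OF bdd f] by blast
qed

lemma Domain_sequence_lift:
  assumes "\<forall>n. f n \<in> Domain S"
  obtains f' where "\<forall>n. (f n, f' n) \<in> S"
proof -
  from assms have "\<forall>n. \<exists>y. (f n, y) \<in> S" by blast
  then show ?thesis using that by metis
qed

lemma form_closure_dom_iff:
  "\<phi> \<in> fst (form_closure (form_of_rel S)) \<longleftrightarrow>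
    (\<exists>f f'. (\<forall>n. (f n, f' n) \<in> S) \<and> f \<longlonglongrightarrow> \<phi> \<and>
      ((\<lambda>(n, m). cinner (f' n - f' m) (f n - f m)) \<longlongrightarrow> 0) (sequentially \<times>\<^sub>F sequentially))"
  (is "_ \<longleftrightarrow> (\<exists>f f'. ?pairs f f' \<and> f \<longlonglongrightarrow> \<phi> \<and> ?lim f f')")
proof -
  have lim_iff: "?lim f f' \<longleftrightarrow> Cauchy (\<lambda>n. Q (f n))" if "?pairs f f'" "f \<longlonglongrightarrow> \<phi>" for f f'
    using that
    by (simp add: cinner_diff_pairs
        Cauchy_iff_tendsto_weighted_norm_diff_sq[OF LIMSEQ_imp_Cauchy[OF that(2)], where c = c])
  show ?thesis
    unfolding form_closure_eq_tbar fst_tbar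
  proof
    assume "\<phi> \<in> Qbar_dom"
    then obtain f where f: "\<forall>n. f n \<in> Domain S" "f \<longlonglongrightarrow> \<phi>" "(\<lambda>n. Q (f n)) \<longlonglongrightarrow> Qbar \<phi>"
      by (rule Qbar_domE)
    obtain f' where "?pairs f f'" using f(1) by (rule Domain_sequence_lift)
    with f(2) LIMSEQ_imp_Cauchy[OF f(3)] lim_iff show "\<exists>f f'. ?pairs f f' \<and> f \<longlonglongrightarrow> \<phi> \<and> ?lim f f'"
      by blast
  next
    assume "\<exists>f f'. ?pairs f f' \<and> f \<longlonglongrightarrow> \<phi> \<and> ?lim f f'"
    then obtain f f' where f: "?pairs f f'" "f \<longlonglongrightarrow> \<phi>" "?lim f f'" by blast
    with lim_iff obtain h where "(\<lambda>n. Q (f n)) \<longlonglongrightarrow> h"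
      by (auto simp: Cauchy_convergent_iff convergent_def)
    with f show "\<phi> \<in> Qbar_dom" by (auto intro: Qbar_limit)
  qed
qed

lemma form_closure_kernel_iff:
  "(\<phi> \<in> fst (form_closure (form_of_rel S)) \<and>
      snd (form_closure (form_of_rel S)) \<phi> \<phi> = complex_of_real (c * (norm \<phi>)\<^sup>2)) \<longleftrightarrow>
    (\<exists>f f'. (\<forall>n. (f n, f' n) \<in> S) \<and> f \<longlonglongrightarrow> \<phi> \<and>
      (\<lambda>n. cinner (f' n - c *\<^sub>R f n) (f n)) \<longlonglongrightarrow> 0)"
  (is "_ \<longleftrightarrow> (\<exists>f f'. ?pairs f f' \<and> f \<longlonglongrightarrow> \<phi> \<and> ?lim f f')")
proof -
  have lim_iff: "?lim f f' \<longleftrightarrow> (\<lambda>n. Q (f n)) \<longlonglongrightarrow> 0" if "?pairs f f'" for f f'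
  proof -
    have "?lim f f' \<longleftrightarrow> ((\<lambda>n. complex_of_real ((norm (Q (f n)))\<^sup>2)) \<longlonglongrightarrow> of_real 0)"
      using that by (simp add: cinner_shift_self)
    also have "\<dots> \<longleftrightarrow> (\<lambda>n. Q (f n)) \<longlonglongrightarrow> 0"
      by (simp only: tendsto_of_real_iff tendsto_power2_zero_iff tendsto_norm_zero_iff)
    finally show ?thesis .
  qed
  have "(\<phi> \<in> Qbar_dom \<and> snd tbar \<phi> \<phi> = of_real (c * (norm \<phi>)\<^sup>2)) \<longleftrightarrow> \<phi> \<in> Qbar_dom \<and> Qbar \<phi> = 0"
    by (auto simp: tbar_diag)
  also have "\<dots> \<longleftrightarrow> (\<exists>f f'. ?pairs f f' \<and> f \<longlonglongrightarrow> \<phi> \<and> ?lim f f')"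
  proof
    assume "\<phi> \<in> Qbar_dom \<and> Qbar \<phi> = 0"
    then obtain f where f: "\<forall>n. f n \<in> Domain S" "f \<longlonglongrightarrow> \<phi>" "(\<lambda>n. Q (f n)) \<longlonglongrightarrow> 0"
      using Qbar_domE by metis
    obtain f' where "?pairs f f'" using f(1) by (rule Domain_sequence_lift)
    with f(2,3) lim_iff show "\<exists>f f'. ?pairs f f' \<and> f \<longlonglongrightarrow> \<phi> \<and> ?lim f f'" by blast
  next
    assume "\<exists>f f'. ?pairs f f' \<and> f \<longlonglongrightarrow> \<phi> \<and> ?lim f f'"
    then obtain f f' where "?pairs f f'" "f \<longlonglongrightarrow> \<phi>" "(\<lambda>n. Q (f n)) \<longlonglongrightarrow> 0"
      using lim_iff by blast
    then show "\<phi> \<in> Qbar_dom \<and> Qbar \<phi> = 0" using Qbar_limit[of f \<phi> 0] by blast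
  qed
  finally show ?thesis unfolding form_closure_eq_tbar fst_tbar .
qed

lemma range_adjoint_iff:
  "\<phi> \<in> Range (adjoint_rel (op_graph Q (Domain S))) \<longleftrightarrow>
    (\<exists>C. \<forall>\<psi> \<psi>'. (\<psi>, \<psi>') \<in> shift_rel S c \<longrightarrow> (cmod (cinner \<psi> \<phi>))\<^sup>2 \<le> C * Re (cinner \<psi>' \<psi>))"
proof -
  have shift: "(\<psi>, \<psi>') \<in> shift_rel S c \<longleftrightarrow> (\<exists>g. (\<psi>, g) \<in> S \<and> \<psi>' = g - c *\<^sub>R \<psi>)" for \<psi> \<psi>'
    unfolding shift_rel_def by auto
  have "\<phi> \<in> Range (adjoint_rel (op_graph Q (Domain S))) \<longleftrightarrow>
      (\<exists>h. \<forall>g\<in>Domain S. cinner \<phi> g = cinner h (Q g))"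
    unfolding adjoint_rel_def op_graph_def by auto
  also have "\<dots> \<longleftrightarrow> (\<exists>C. \<forall>\<psi>\<in>Domain S. (cmod (cinner \<psi> \<phi>))\<^sup>2 \<le> C * (norm (Q \<psi>))\<^sup>2)"
  proof
    assume "\<exists>h. \<forall>g\<in>Domain S. cinner \<phi> g = cinner h (Q g)"
    then obtain h where h: "\<forall>g\<in>Domain S. cinner \<phi> g = cinner h (Q g)" by blast
    have "(cmod (cinner \<psi> \<phi>))\<^sup>2 \<le> (norm h)\<^sup>2 * (norm (Q \<psi>))\<^sup>2" if "\<psi> \<in> Domain S" for \<psi>
    proof -
      have "cmod (cinner \<psi> \<phi>) = cmod (cinner h (Q \<psi>))"
        using h that cinner_commute[of \<psi> \<phi>] by simp
      also have "\<dots> \<le> norm h * norm (Q \<psi>)" by (rule norm_cinner_le)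
      finally show ?thesis by (simp add: power_mono power_mult_distrib[symmetric])
    qed
    then show "\<exists>C. \<forall>\<psi>\<in>Domain S. (cmod (cinner \<psi> \<phi>))\<^sup>2 \<le> C * (norm (Q \<psi>))\<^sup>2" by blast
  qed (auto intro: exists_representing_vector)
  also have "\<dots> \<longleftrightarrow> (\<exists>C. \<forall>\<psi> \<psi>'. (\<psi>, \<psi>') \<in> shift_rel S c \<longrightarrow> (cmod (cinner \<psi> \<phi>))\<^sup>2 \<le> C * Re (cinner \<psi>' \<psi>))"
  proof -
    have "(\<forall>\<psi> \<psi>'. (\<psi>, \<psi>') \<in> shift_rel S c \<longrightarrow> (cmod (cinner \<psi> \<phi>))\<^sup>2 \<le> C * Re (cinner \<psi>' \<psi>)) \<longleftrightarrow>
        (\<forall>\<psi> g. (\<psi>, g) \<in> S \<longrightarrow> (cmod (cinner \<psi> \<phi>))\<^sup>2 \<le> C * (norm (Q \<psi>))\<^sup>2)" for C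
      unfolding shift
    proof (intro iffI allI impI)
      fix \<psi> g assume bound: "\<forall>\<psi> \<psi>'. (\<exists>g. (\<psi>, g) \<in> S \<and> \<psi>' = g - c *\<^sub>R \<psi>) \<longrightarrow>
          (cmod (cinner \<psi> \<phi>))\<^sup>2 \<le> C * Re (cinner \<psi>' \<psi>)" and "(\<psi>, g) \<in> S"
      then show "(cmod (cinner \<psi> \<phi>))\<^sup>2 \<le> C * (norm (Q \<psi>))\<^sup>2"
        using bound[rule_format, of \<psi> "g - c *\<^sub>R \<psi>"] by (auto simp: cinner_shift_self)
    qed (auto simp: cinner_shift_self)
    then show ?thesis by (simp add: Domain_iff Ball_def)
  qed
  finally show ?thesis .
qed

end

theorem theorem2p5:
  fixes S :: "('a::{complex_inner, complete_space} \<times> 'a) set"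
    and Q :: "'a \<Rightarrow> 'b::{complex_inner, complete_space}"
    and \<gamma> c :: real
  assumes "linear_rel S"
    and "semibounded_with_lb S \<gamma>"
    and "c \<le> \<gamma>"
    and "representing_map S c Q"
  shows "(\<forall>\<phi>. \<phi> \<in> fst (form_closure (form_of_rel S)) \<longleftrightarrow>
           (\<exists>f f'. (\<forall>n. (f n, f' n) \<in> S) \<and> f \<longlonglongrightarrow> \<phi> \<and>
              ((\<lambda>(n, m). cinner (f' n - f' m) (f n - f m)) \<longlongrightarrow> 0)
                (sequentially \<times>\<^sub>F sequentially))) \<and>
        (\<forall>\<phi>. (\<phi> \<in> fst (form_closure (form_of_rel S)) \<and>
             snd (form_closure (form_of_rel S)) \<phi> \<phi> = complex_of_real (c * (norm \<phi>)\<^sup>2)) \<longleftrightarrow>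
           (\<exists>f f'. (\<forall>n. (f n, f' n) \<in> S) \<and> f \<longlonglongrightarrow> \<phi> \<and>
              (\<lambda>n. cinner (f' n - c *\<^sub>R f n) (f n)) \<longlonglongrightarrow> 0)) \<and>
        (\<forall>\<phi>. \<phi> \<in> Range (adjoint_rel (op_graph Q (Domain S))) \<longleftrightarrow>
           (\<exists>C. \<forall>\<psi> \<psi>'. (\<psi>, \<psi>') \<in> shift_rel S c \<longrightarrow>
              (cmod (cinner \<psi> \<phi>))\<^sup>2 \<le> C * Re (cinner \<psi>' \<psi>)))"
proof -
  interpret semibounded_representation S Q \<gamma> c
    using assms by unfold_locales
  show ?thesis
    using form_closure_dom_iff form_closure_kernel_iff range_adjoint_iff by blast
qed

end
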